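(* Let $L\ge1$ and for $l=1,\ldots,L$ let $\mathcal{E}^{l}=\{\eta_{i}^{l},\rho_{i}^{l}\}_{i\in\mathbb{N}_{n_{l}}}$ be an ensemble on a finite-dimensional Hilbert space $\mathcal{H}_l$, and let $\mathcal{M}^{l}=\{M_{?}^{l}\}\cup\{M_{i}^{l}\}_{i\in\mathbb{N}_{n_{l}}}$ be a maximum-confidence measurement of $\mathcal{E}^{l}$. Let $\mathcal{M}=\{M_{?}\}\cup\{M_{\vec c}\}_{\vec c\in\mathbb{N}_{\vec n}}$ be a measurement on $\bigotimes_l\mathcal{H}_l$ such that $M_{\vec c}=M^{1}_{c_1}\otimes\cdots\otimes M^{L}_{c_L}$ for every $\vec c=(c_1,\ldots,c_L)\in\mathbb{N}_{\vec n}$. Then $\mathcal{M}$ is a maximum-confidence measurement of the quantum sequence ensemble $\mathcal{E}=\bigotimes_{l=1}^{L}\mathcal{E}^{l}$.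
   Context: $\mathbb{N}_{n}=\{1,\ldots,n\}$, $\mathbb{N}_{\vec n}=\mathbb{N}_{n_1}\times\cdots\times\mathbb{N}_{n_L}$. An ensemble $\mathcal{E}=\{\eta_{i},\rho_{i}\}_{i\in I}$ (finite index set $I$) on a finite-dimensional complex Hilbert space: density operators $\rho_i$ with probabilities $\eta_i>0$ summing to $1$; $\rho_0=\sum_i\eta_i\rho_i$. A measurement is $\{M_{?}\}\cup\{M_{i}\}_{i\in I}$, positive-semidefinite operators summing to the identity. $\mathcal{C}_{x}(\mathcal{E})$ is the maximum of $\eta_{x}\Tr(\rho_{x}M_{x})/\Tr(\rho_{0}M_{x})$ over measurements with $\Tr(\rho_{0}M_{x})>0$. A measurement is a maximum-confidence measurement of $\mathcal{E}$ if $\Tr[(\mathcal{C}_{i}(\mathcal{E})\rho_{0}-\eta_{i}\rho_{i})M_i]=0$ for all $i\in I$. The quantum sequence ensemble $\bigotimes_l\mathcal{E}^l$ is the ensemble on $\bigotimes_l\mathcal{H}_l$ indexed by $\mathbb{N}_{\vec n}$ with $\eta_{\vec c}=\prod_l\eta^l_{c_l}$, $\rho_{\vec c}=\bigotimes_l\rho^l_{c_l}$. *)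

theory Defs
  imports "Jordan_Normal_Form.Matrix"
begin

text \<open>Operators on the finite-dimensional Hilbert space C^n are complex n x n matrices.\<close>

definition mtrace :: "complex mat \<Rightarrow> complex" where
  "mtrace A = (\<Sum>i<dim_row A. A $$ (i, i))"

definition hermitian_mat :: "nat \<Rightarrow> complex mat \<Rightarrow> bool" where
  "hermitian_mat n A \<longleftrightarrow> A \<in> carrier_mat n n \<and>
     (\<forall>i<n. \<forall>j<n. A $$ (i, j) = cnj (A $$ (j, i)))"

definition psd :: "nat \<Rightarrow> complex mat \<Rightarrow> bool" where
  "psd n A \<longleftrightarrow> hermitian_mat n A \<and>
     (\<forall>v \<in> carrier_vec n. let q = (\<Sum>i<n. cnj (v $ i) * (A *\<^sub>v v) $ i) in Im q = 0 \<and> 0 \<le> Re q)"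

definition density_op :: "nat \<Rightarrow> complex mat \<Rightarrow> bool" where
  "density_op n \<rho> \<longleftrightarrow> psd n \<rho> \<and> mtrace \<rho> = 1"

definition ensemble :: "nat \<Rightarrow> 'i set \<Rightarrow> ('i \<Rightarrow> real) \<Rightarrow> ('i \<Rightarrow> complex mat) \<Rightarrow> bool" where
  "ensemble n I \<eta> \<rho> \<longleftrightarrow> finite I \<and> (\<forall>i\<in>I. 0 < \<eta> i \<and> density_op n (\<rho> i)) \<and> (\<Sum>i\<in>I. \<eta> i) = 1"

definition avg_state :: "nat \<Rightarrow> 'i set \<Rightarrow> ('i \<Rightarrow> real) \<Rightarrow> ('i \<Rightarrow> complex mat) \<Rightarrow> complex mat" where
  "avg_state n I \<eta> \<rho> = mat n n (\<lambda>(a, b). \<Sum>i\<in>I. complex_of_real (\<eta> i) * \<rho> i $$ (a, b))"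

definition measurement :: "nat \<Rightarrow> 'i set \<Rightarrow> complex mat \<Rightarrow> ('i \<Rightarrow> complex mat) \<Rightarrow> bool" where
  "measurement n I Mq M \<longleftrightarrow> psd n Mq \<and> (\<forall>i\<in>I. psd n (M i)) \<and>
     (\<forall>a<n. \<forall>b<n. Mq $$ (a, b) + (\<Sum>i\<in>I. M i $$ (a, b)) = (1\<^sub>m n :: complex mat) $$ (a, b))"

text \<open>The maximum confidence C_x(E) (supremum, which is attained, of the confidence ratio).\<close>
definition max_conf_value :: "nat \<Rightarrow> 'i set \<Rightarrow> ('i \<Rightarrow> real) \<Rightarrow> ('i \<Rightarrow> complex mat) \<Rightarrow> 'i \<Rightarrow> real" where
  "max_conf_value n I \<eta> \<rho> x = Sup
     {\<eta> x * Re (mtrace (\<rho> x * M x)) / Re (mtrace (avg_state n I \<eta> \<rho> * M x)) | Mq M.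
        measurement n I Mq M \<and> 0 < Re (mtrace (avg_state n I \<eta> \<rho> * M x))}"

definition max_conf_measurement ::
  "nat \<Rightarrow> 'i set \<Rightarrow> ('i \<Rightarrow> real) \<Rightarrow> ('i \<Rightarrow> complex mat) \<Rightarrow> complex mat \<Rightarrow> ('i \<Rightarrow> complex mat) \<Rightarrow> bool" where
  "max_conf_measurement n I \<eta> \<rho> Mq M \<longleftrightarrow> measurement n I Mq M \<and>
     (\<forall>i\<in>I. mtrace ((complex_of_real (max_conf_value n I \<eta> \<rho> i) \<cdot>\<^sub>m avg_state n I \<eta> \<rho>
                      - complex_of_real (\<eta> i) \<cdot>\<^sub>m \<rho> i) * M i) = 0)"

definition kron_mat :: "complex mat \<Rightarrow> complex mat \<Rightarrow> complex mat" where
  "kron_mat A B = mat (dim_row A * dim_row B) (dim_col A * dim_col B)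
     (\<lambda>(i, j). A $$ (i div dim_row B, j div dim_col B) * B $$ (i mod dim_row B, j mod dim_col B))"

fun tensor_list :: "complex mat list \<Rightarrow> complex mat" where
  "tensor_list [] = 1\<^sub>m 1"
| "tensor_list (A # As) = kron_mat A (tensor_list As)"

definition seq_index :: "nat \<Rightarrow> (nat \<Rightarrow> nat) \<Rightarrow> nat list set" where
  "seq_index L n = {c. length c = L \<and> (\<forall>l<L. c ! l \<in> {1..n l})}"

definition seq_eta :: "nat \<Rightarrow> (nat \<Rightarrow> nat \<Rightarrow> real) \<Rightarrow> nat list \<Rightarrow> real" where
  "seq_eta L \<eta> c = (\<Prod>l<L. \<eta> l (c ! l))"

definition seq_rho :: "nat \<Rightarrow> (nat \<Rightarrow> nat \<Rightarrow> complex mat) \<Rightarrow> nat list \<Rightarrow> complex mat" where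
  "seq_rho L \<rho> c = tensor_list (map (\<lambda>l. \<rho> l (c ! l)) [0..<L])"

end

(* For a single ensemble, testing with the two-outcome measurement {1 - P, P}, P the projection
   onto a vector f, shows that C_x rho_0 - eta_x rho_x is positive semidefinite; conversely, any
   positive semidefinite K rho_0 - eta_x rho_x bounds every confidence ratio for x by K, so a
   measurement attaining the ratio K certifies C_x = K.

   For the sequence ensemble write K = prod_l C_l with C_l = C_{c_l}(E^l), X_l = eta_l rho_l and
   C_l rho^l_0 = X_l + Y_l with Y_l psd. Then K rho_0 - eta_c rho_c is the difference of the tensor
   products of the X_l + Y_l and of the X_l, which is psd (tensor products of psd matrices are psd,
   via Gram factorizations). Its trace against M_c = tensor_l M^l_{c_l} factorizes into the local
   traces, which vanish by the maximum-confidence property of each M^l. Hence either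
   tr(rho_0 M_c) = 0 and the condition for c is trivial, or M attains the ratio K and C_c = K. *)

theory Submission
  imports Defs "HOL-Analysis.Convex"
begin

section \<open>Quadratic forms of entry functions\<close>

definition qform :: "nat \<Rightarrow> (nat \<Rightarrow> nat \<Rightarrow> complex) \<Rightarrow> (nat \<Rightarrow> complex) \<Rightarrow> complex" where
  "qform n F f = (\<Sum>i<n. \<Sum>j<n. cnj (f i) * F i j * f j)"

definition hermitian_fn :: "nat \<Rightarrow> (nat \<Rightarrow> nat \<Rightarrow> complex) \<Rightarrow> bool" where
  "hermitian_fn n F \<longleftrightarrow> (\<forall>i<n. \<forall>j<n. F i j = cnj (F j i))"

definition psd_fn :: "nat \<Rightarrow> (nat \<Rightarrow> nat \<Rightarrow> complex) \<Rightarrow> bool" where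
  "psd_fn n F \<longleftrightarrow> (\<forall>f. Im (qform n F f) = 0 \<and> 0 \<le> Re (qform n F f))"

lemma hermitian_fnD: "hermitian_fn n F \<Longrightarrow> i < n \<Longrightarrow> j < n \<Longrightarrow> F i j = cnj (F j i)"
  unfolding hermitian_fn_def by blast

lemma qform_cong: "(\<And>i. i < n \<Longrightarrow> f i = g i) \<Longrightarrow> qform n F f = qform n F g"
  unfolding qform_def by (intro sum.cong refl) auto

lemma qform_cong_fn: "(\<And>i j. i < n \<Longrightarrow> j < n \<Longrightarrow> F i j = G i j) \<Longrightarrow> qform n F f = qform n G f"
  unfolding qform_def by (intro sum.cong refl) auto

lemma qform_add: "qform n (\<lambda>i j. F i j + G i j) f = qform n F f + qform n G f"
  unfolding qform_def by (simp add: algebra_simps sum.distrib)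

lemma qform_diff: "qform n (\<lambda>i j. F i j - G i j) f = qform n F f - qform n G f"
  unfolding qform_def by (simp add: algebra_simps sum_subtractf)

lemma qform_scale: "qform n (\<lambda>i j. c * F i j) f = c * qform n F f"
  unfolding qform_def by (simp add: algebra_simps sum_distrib_left)

lemma qform_sum: "qform n (\<lambda>i j. \<Sum>x\<in>I. G x i j) f = (\<Sum>x\<in>I. qform n (G x) f)"
  unfolding qform_def by (simp add: sum_distrib_left sum_distrib_right sum.swap[of _ I])

lemma qform_zero_vec [simp]: "qform n F (\<lambda>_. 0) = 0"
  by (simp add: qform_def)

lemma sum_cmod_square_pos_of_qform:
  assumes "qform n F f \<noteq> 0"
  shows "0 < (\<Sum>i<n. (cmod (f i))\<^sup>2)"
proof (rule ccontr)
  assume "\<not> 0 < (\<Sum>i<n. (cmod (f i))\<^sup>2)"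
  moreover have "0 \<le> (\<Sum>i<n. (cmod (f i))\<^sup>2)"
    by (intro sum_nonneg) simp
  ultimately have "\<forall>i\<in>{..<n}. (cmod (f i))\<^sup>2 = 0"
    by (subst sum_nonneg_eq_0_iff[symmetric]) auto
  then have "qform n F f = qform n F (\<lambda>_. 0)"
    by (intro qform_cong) simp
  with assms show False by simp
qed

lemma hermitian_fn_add:
  assumes "hermitian_fn n F" "hermitian_fn n G"
  shows "hermitian_fn n (\<lambda>i j. F i j + G i j)"
  unfolding hermitian_fn_def
proof (intro allI impI)
  fix i j assume "i < n" "j < n"
  then show "F i j + G i j = cnj (F j i + G j i)"
    using hermitian_fnD[OF assms(1), of i j] hermitian_fnD[OF assms(2), of i j] by simp
qed

lemma hermitian_fn_diff:
  assumes "hermitian_fn n F" "hermitian_fn n G"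
  shows "hermitian_fn n (\<lambda>i j. F i j - G i j)"
  unfolding hermitian_fn_def
proof (intro allI impI)
  fix i j assume "i < n" "j < n"
  then show "F i j - G i j = cnj (F j i - G j i)"
    using hermitian_fnD[OF assms(1), of i j] hermitian_fnD[OF assms(2), of i j] by simp
qed

lemma hermitian_fn_scale:
  assumes "hermitian_fn n F"
  shows "hermitian_fn n (\<lambda>i j. complex_of_real c * F i j)"
  unfolding hermitian_fn_def
proof (intro allI impI)
  fix i j assume "i < n" "j < n"
  then show "complex_of_real c * F i j = cnj (complex_of_real c * F j i)"
    using hermitian_fnD[OF assms, of i j] by simp
qed

lemma hermitian_fn_sum:
  assumes "\<And>x. x \<in> I \<Longrightarrow> hermitian_fn n (G x)"
  shows "hermitian_fn n (\<lambda>i j. \<Sum>x\<in>I. G x i j)"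
  unfolding hermitian_fn_def
proof (intro allI impI)
  fix i j assume ij: "i < n" "j < n"
  show "(\<Sum>x\<in>I. G x i j) = cnj (\<Sum>x\<in>I. G x j i)"
  proof -
    have "(\<Sum>x\<in>I. G x i j) = (\<Sum>x\<in>I. cnj (G x j i))"
      by (intro sum.cong refl hermitian_fnD[OF assms]) (use ij in auto)
    then show ?thesis by (simp add: cnj_sum)
  qed
qed

lemma hermitian_fn_rank_one_update:
  assumes "hermitian_fn n F"
  shows "hermitian_fn n (\<lambda>i j. F i j - w i * cnj (w j))"
  unfolding hermitian_fn_def
proof (intro allI impI)
  fix i j assume "i < n" "j < n"
  then show "F i j - w i * cnj (w j) = cnj (F j i - w j * cnj (w i))"
    using hermitian_fnD[OF assms, of i j] by simp
qed

lemma hermitian_fn_gram: "hermitian_fn n (\<lambda>i j. \<Sum>k\<in>K. u k i * cnj (u k j))"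
  unfolding hermitian_fn_def by (simp add: cnj_sum mult.commute)

lemma psd_fn_add: "psd_fn n F \<Longrightarrow> psd_fn n G \<Longrightarrow> psd_fn n (\<lambda>i j. F i j + G i j)"
  unfolding psd_fn_def qform_add by simp

lemma psd_fn_scale: "0 \<le> c \<Longrightarrow> psd_fn n F \<Longrightarrow> psd_fn n (\<lambda>i j. complex_of_real c * F i j)"
  unfolding psd_fn_def qform_scale by simp

lemma psd_fn_sum: "(\<And>x. x \<in> I \<Longrightarrow> psd_fn n (G x)) \<Longrightarrow> psd_fn n (\<lambda>i j. \<Sum>x\<in>I. G x i j)"
  unfolding psd_fn_def qform_sum by (simp add: sum_nonneg)

lemma psd_fn_gram:
  assumes "\<And>i j. i < n \<Longrightarrow> j < n \<Longrightarrow> F i j = (\<Sum>k\<in>K. u k i * cnj (u k j))"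
  shows "psd_fn n F"
  unfolding psd_fn_def
proof
  fix f :: "nat \<Rightarrow> complex"
  define \<sigma> where "\<sigma> k = (\<Sum>j<n. cnj (u k j) * f j)" for k
  have "qform n F f = (\<Sum>k\<in>K. (\<Sum>i<n. cnj (f i) * u k i) * (\<Sum>j<n. cnj (u k j) * f j))"
    unfolding qform_def sum_product using assms
    by (simp add: sum_distrib_left sum_distrib_right sum.swap[of _ K] mult_ac)
  also have "\<dots> = (\<Sum>k\<in>K. cnj (\<sigma> k) * \<sigma> k)"
    unfolding \<sigma>_def by (simp add: mult.commute)
  also have "\<dots> = (\<Sum>k\<in>K. complex_of_real ((cmod (\<sigma> k))\<^sup>2))"
    by (intro sum.cong refl) (metis complex_norm_square mult.commute)
  finally show "Im (qform n F f) = 0 \<and> 0 \<le> Re (qform n F f)"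
    by (simp add: sum_nonneg)
qed

section \<open>Gram factorization\<close>

lemma qform_add_delta:
  assumes "k < n"
  shows "qform n F (\<lambda>i. f i + (if i = k then b else 0)) = qform n F f + cnj b * (\<Sum>j<n. F k j * f j)
     + b * (\<Sum>i<n. cnj (f i) * F i k) + cnj b * b * F k k"
proof -
  have expand: "cnj (f i + (if i = k then b else 0)) * F i j * (f j + (if j = k then b else 0)) =
     cnj (f i) * F i j * f j + (if i = k then cnj b * F k j * f j else 0)
     + (if j = k then cnj (f i) * F i k * b else 0) + (if i = k \<and> j = k then cnj b * b * F k k else 0)"
    for i j
    by (auto simp: algebra_simps)
  have pull_if: "(\<Sum>j<n. if P then g j else 0) = (if P then \<Sum>j<n. g j else 0)" for P and g :: "nat \<Rightarrow> complex"
    by simp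
  have row: "(\<Sum>i<n. \<Sum>j<n. if i = k then cnj b * F k j * f j else 0) = cnj b * (\<Sum>j<n. F k j * f j)"
    using assms by (simp add: pull_if sum.delta sum_distrib_left mult.assoc)
  have col: "(\<Sum>i<n. \<Sum>j<n. if j = k then cnj (f i) * F i k * b else 0) = b * (\<Sum>i<n. cnj (f i) * F i k)"
    using assms by (simp add: sum.delta sum_distrib_left algebra_simps)
  have diag: "(\<Sum>i<n. \<Sum>j<n. if i = k \<and> j = k then cnj b * b * F k k else 0) = cnj b * b * F k k"
    using assms by (simp add: pull_if sum.delta flip: if_if_eq_conj)
  show ?thesis
    unfolding qform_def expand sum.distrib row col diag by simp
qed

lemma qform_delta: "k < n \<Longrightarrow> qform n F (\<lambda>i. if i = k then b else 0) = cnj b * b * F k k"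
  using qform_add_delta[of k n F "\<lambda>_. 0" b] by simp

lemma psd_fn_diag:
  assumes "psd_fn n F" "k < n"
  shows "Im (F k k) = 0" "0 \<le> Re (F k k)"
  using assms qform_delta[of k n F 1] unfolding psd_fn_def by (metis complex_cnj_one mult_1)+

lemma psd_fn_zero_diag_row:
  assumes herm: "hermitian_fn n F" and pos: "psd_fn n F" and k: "k < n" and j: "j < n"
    and diag: "F k k = 0"
  shows "F k j = 0"
proof (rule ccontr)
  define b where "b = F k j"
  define c where "c = Re (F j j)"
  assume "F k j \<noteq> 0"
  then have bb: "cnj b * b \<noteq> 0" unfolding b_def by simp
  have c: "0 \<le> c" unfolding c_def by (rule psd_fn_diag[OF pos j])
  \<comment> \<open>s is chosen so that the form at e_j + s e_k equals F j j - 2 (c + 1), whose real part is negative\<close>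
  define s where "s = - complex_of_real (c + 1) * b / (cnj b * b)"
  have row: "(\<Sum>j'<n. F k j' * (if j' = j then 1 else 0)) = b"
  proof -
    have "(\<Sum>j'<n. F k j' * (if j' = j then 1 else 0)) = (\<Sum>j'<n. if j' = j then F k j' else 0)"
      by (intro sum.cong) auto
    then show ?thesis using j unfolding b_def by simp
  qed
  have col: "(\<Sum>i<n. cnj (if i = j then 1 else 0) * F i k) = cnj b"
  proof -
    have "(\<Sum>i<n. cnj (if i = j then 1 else 0) * F i k) = (\<Sum>i<n. if i = j then F i k else 0)"
      by (intro sum.cong) auto
    then show ?thesis using j hermitian_fnD[OF herm j k] unfolding b_def by simp
  qed
  have "qform n F (\<lambda>i. (if i = j then 1 else 0) + (if i = k then s else 0)) = F j j + cnj s * b + s * cnj b"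
    using qform_add_delta[OF k, of F "\<lambda>i. if i = j then 1 else 0" s] row col diag qform_delta[OF j, of F 1]
    by simp
  also have "\<dots> = F j j - 2 * complex_of_real (c + 1)"
  proof -
    have "cnj s * b = - complex_of_real (c + 1)" "s * cnj b = - complex_of_real (c + 1)"
      unfolding s_def using bb by (simp_all add: field_simps)
    then show ?thesis by simp
  qed
  finally have "Re (qform n F (\<lambda>i. (if i = j then 1 else 0) + (if i = k then s else 0))) = - c - 2"
    unfolding c_def by simp
  moreover have "0 \<le> Re (qform n F (\<lambda>i. (if i = j then 1 else 0) + (if i = k then s else 0)))"
    using pos unfolding psd_fn_def by blast
  ultimately show False using c by linarith
qed

lemma psd_fn_schur_complement:
  assumes herm: "hermitian_fn n F" and pos: "psd_fn n F" and k: "k < n" and pivot: "0 < Re (F k k)"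
  defines "w \<equiv> \<lambda>i. F i k / complex_of_real (sqrt (Re (F k k)))"
  shows "psd_fn n (\<lambda>i j. F i j - w i * cnj (w j))"
  unfolding psd_fn_def
proof
  fix f :: "nat \<Rightarrow> complex"
  define a where "a = F k k"
  define r where "r = complex_of_real (sqrt (Re a))"
  define s where "s = (\<Sum>j<n. F k j * f j)"
  have a_real: "cnj a = a" and a0: "a \<noteq> 0"
    using psd_fn_diag(1)[OF pos k] pivot unfolding a_def by (auto simp: complex_eq_iff)
  have rr: "r * r = a"
    using pivot psd_fn_diag(1)[OF pos k] unfolding r_def a_def by (simp add: complex_eq_iff flip: of_real_mult)
  have col_k: "F i k = cnj (F k i)" if "i < n" for i
    using hermitian_fnD[OF herm that k] .
  have col: "(\<Sum>i<n. cnj (f i) * F i k) = cnj s"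
    unfolding s_def by (simp add: col_k mult.commute)
  have w_row: "(\<Sum>j<n. cnj (w j) * f j) = s / r"
    unfolding w_def s_def r_def a_def by (simp add: col_k sum_divide_distrib mult.commute)
  have w_col: "(\<Sum>i<n. cnj (f i) * w i) = cnj s / r"
    unfolding w_def r_def a_def col[symmetric] by (simp add: sum_divide_distrib)
  have "qform n (\<lambda>i j. F i j - w i * cnj (w j)) f
      = qform n F f - (\<Sum>i<n. \<Sum>j<n. (cnj (f i) * w i) * (cnj (w j) * f j))"
    unfolding qform_def by (simp add: algebra_simps sum_subtractf)
  also have "\<dots> = qform n F f - (\<Sum>i<n. cnj (f i) * w i) * (\<Sum>j<n. cnj (w j) * f j)"
    by (simp add: sum_product)
  also have "\<dots> = qform n F f - cnj s * s / a"
    unfolding w_row w_col rr[symmetric] by simp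
  \<comment> \<open>completing the square: the Schur complement form is the original form at a shifted vector\<close>
  also have "\<dots> = qform n F (\<lambda>i. f i + (if i = k then - s / a else 0))"
    unfolding qform_add_delta[OF k] col s_def[symmetric] a_def[symmetric]
    using a0 a_real by (simp add: field_simps)
  finally show "Im (qform n (\<lambda>i j. F i j - w i * cnj (w j)) f) = 0 \<and>
      0 \<le> Re (qform n (\<lambda>i j. F i j - w i * cnj (w j)) f)"
    using pos unfolding psd_fn_def by simp
qed

lemma schur_complement_zero_pattern:
  assumes herm: "hermitian_fn n F" and pos: "psd_fn n F" and k: "k < n" and pivot: "0 < Re (F k k)"
    and zero: "\<forall>i<n. \<forall>j<n. (i < k \<or> j < k) \<longrightarrow> F i j = 0"
  defines "w \<equiv> \<lambda>i. F i k / complex_of_real (sqrt (Re (F k k)))"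
  shows "\<forall>i<n. \<forall>j<n. (i < Suc k \<or> j < Suc k) \<longrightarrow> F i j - w i * cnj (w j) = 0"
proof (intro allI impI)
  fix i j assume ij: "i < n" "j < n" "i < Suc k \<or> j < Suc k"
  define r where "r = complex_of_real (sqrt (Re (F k k)))"
  have rr: "r * r = F k k" and r0: "r \<noteq> 0"
    using pivot psd_fn_diag(1)[OF pos k] unfolding r_def by (auto simp: complex_eq_iff simp flip: of_real_mult)
  have kk0: "F k k \<noteq> 0"
    using pivot by auto
  have kk: "cnj (F k k) = F k k"
    using psd_fn_diag(1)[OF pos k] by (simp add: complex_eq_iff)
  consider "i < k" | "j < k" | "i = k" | "j = k" using ij(3) by linarith
  then show "F i j - w i * cnj (w j) = 0"
  proof cases
    case 3
    have "w k * cnj (w j) = F k k * F k j / (r * r)"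
      using hermitian_fnD[OF herm ij(2) k] unfolding w_def r_def by simp
    then show ?thesis using 3 rr r0 kk0 by simp
  next
    case 4
    have "w i * cnj (w k) = F i k * F k k / (r * r)"
      using kk unfolding w_def r_def by simp
    then show ?thesis using 4 rr r0 kk0 by simp
  qed (use zero ij k in \<open>auto simp: w_def\<close>)
qed

lemma gram_factorization_from:
  assumes "hermitian_fn n F" "psd_fn n F" "\<forall>i<n. \<forall>j<n. (i < k \<or> j < k) \<longrightarrow> F i j = 0"
  shows "\<exists>(m::nat) w. \<forall>i<n. \<forall>j<n. F i j = (\<Sum>l<m. w l i * cnj (w l j))"
  using assms
proof (induction "n - k" arbitrary: k F)
  case 0
  then show ?case by (intro exI[of _ "0::nat"]) auto
next
  case (Suc t)
  note herm = Suc.prems(1) and pos = Suc.prems(2) and zero = Suc.prems(3)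
  have k: "k < n" and t: "t = n - Suc k" using Suc.hyps(2) by simp_all
  consider "F k k = 0" | "0 < Re (F k k)"
    using psd_fn_diag[OF pos k] by (cases "Re (F k k) = 0") (auto simp: complex_eq_iff)
  then show ?case
  proof cases
    case 1
    have row: "F k j = 0" "F j k = 0" if "j < n" for j
      using psd_fn_zero_diag_row[OF herm pos k that 1] hermitian_fnD[OF herm that k] by auto
    have "\<forall>i<n. \<forall>j<n. (i < Suc k \<or> j < Suc k) \<longrightarrow> F i j = 0"
      using zero row by (auto simp: less_Suc_eq)
    then show ?thesis using Suc.hyps(1)[OF t herm pos] by blast
  next
    case 2
    define w where "w i = F i k / complex_of_real (sqrt (Re (F k k)))" for i
    obtain m :: nat and v where v: "\<forall>i<n. \<forall>j<n. F i j - w i * cnj (w j) = (\<Sum>l<m. v l i * cnj (v l j))"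
      using Suc.hyps(1)[OF t hermitian_fn_rank_one_update[OF herm]
          psd_fn_schur_complement[OF herm pos k 2] schur_complement_zero_pattern[OF herm pos k 2 zero]]
      unfolding w_def by blast
    have "F i j = (\<Sum>l<Suc m. (v(m := w)) l i * cnj ((v(m := w)) l j))" if "i < n" "j < n" for i j
      using v that by (simp add: algebra_simps)
    then show ?thesis by blast
  qed
qed

lemma gram_factorization:
  "hermitian_fn n F \<Longrightarrow> psd_fn n F \<Longrightarrow> \<exists>(m::nat) w. \<forall>i<n. \<forall>j<n. F i j = (\<Sum>l<m. w l i * cnj (w l j))"
  using gram_factorization_from[of n F 0] by simp

section \<open>Positive semidefinite matrices\<close>

abbreviation entries :: "complex mat \<Rightarrow> nat \<Rightarrow> nat \<Rightarrow> complex" where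
  "entries A \<equiv> \<lambda>i j. A $$ (i, j)"

lemma qform_entries:
  assumes A: "A \<in> carrier_mat n n" and v: "v \<in> carrier_vec n"
  shows "(\<Sum>i<n. cnj (v $ i) * (A *\<^sub>v v) $ i) = qform n (entries A) (\<lambda>i. v $ i)"
proof -
  have "(A *\<^sub>v v) $ i = (\<Sum>j<n. A $$ (i, j) * v $ j)" if "i < n" for i
    using A v that by (simp add: scalar_prod_def atLeast0LessThan)
  then show ?thesis unfolding qform_def by (simp add: sum_distrib_left mult.assoc)
qed

lemma psd_iff_fn: "psd n A \<longleftrightarrow> A \<in> carrier_mat n n \<and> hermitian_fn n (entries A) \<and> psd_fn n (entries A)"
proof -
  have "(\<forall>v\<in>carrier_vec n. let q = (\<Sum>i<n. cnj (v $ i) * (A *\<^sub>v v) $ i) in Im q = 0 \<and> 0 \<le> Re q)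
      \<longleftrightarrow> psd_fn n (entries A)" if A: "A \<in> carrier_mat n n"
  proof
    assume vecs: "\<forall>v\<in>carrier_vec n. let q = (\<Sum>i<n. cnj (v $ i) * (A *\<^sub>v v) $ i) in Im q = 0 \<and> 0 \<le> Re q"
    show "psd_fn n (entries A)"
      unfolding psd_fn_def
    proof
      fix f :: "nat \<Rightarrow> complex"
      have "qform n (entries A) f = qform n (entries A) (\<lambda>i. vec n f $ i)"
        by (rule qform_cong) simp
      also have "\<dots> = (\<Sum>i<n. cnj (vec n f $ i) * (A *\<^sub>v vec n f) $ i)"
        using qform_entries[OF A, of "vec n f"] by simp
      finally show "Im (qform n (entries A) f) = 0 \<and> 0 \<le> Re (qform n (entries A) f)"
        using bspec[OF vecs vec_carrier[of n f]] unfolding Let_def by simp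
    qed
  next
    assume "psd_fn n (entries A)"
    then show "\<forall>v\<in>carrier_vec n. let q = (\<Sum>i<n. cnj (v $ i) * (A *\<^sub>v v) $ i) in Im q = 0 \<and> 0 \<le> Re q"
      unfolding psd_fn_def Let_def using qform_entries[OF A] by simp
  qed
  moreover have "hermitian_mat n A \<longleftrightarrow> A \<in> carrier_mat n n \<and> hermitian_fn n (entries A)"
    unfolding hermitian_mat_def hermitian_fn_def by blast
  ultimately show ?thesis
    unfolding psd_def by blast
qed

lemma psd_carrier: "psd n A \<Longrightarrow> A \<in> carrier_mat n n"
  unfolding psd_iff_fn by blast

lemma psd_of_fn:
  assumes "A \<in> carrier_mat n n" "hermitian_fn n F" "psd_fn n F"
    and "\<And>i j. i < n \<Longrightarrow> j < n \<Longrightarrow> A $$ (i, j) = F i j"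
  shows "psd n A"
proof -
  have "hermitian_fn n (entries A)"
    unfolding hermitian_fn_def
  proof (intro allI impI)
    fix i j assume "i < n" "j < n"
    then show "A $$ (i, j) = cnj (A $$ (j, i))"
      using assms(4) hermitian_fnD[OF assms(2), of i j] by simp
  qed
  moreover have "psd_fn n (entries A)"
    using assms(3) qform_cong_fn[of n "entries A" F] assms(4) unfolding psd_fn_def by simp
  ultimately show ?thesis
    using assms(1) unfolding psd_iff_fn by blast
qed

lemma psd_add:
  assumes "psd n A" "psd n B"
  shows "psd n (A + B)"
  using assms by (intro psd_of_fn[where F="\<lambda>i j. A $$ (i, j) + B $$ (i, j)"])
    (auto simp: psd_iff_fn hermitian_fn_add psd_fn_add)

lemma psd_smult:
  assumes "0 \<le> c" "psd n A"
  shows "psd n (complex_of_real c \<cdot>\<^sub>m A)"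
  using assms by (intro psd_of_fn[where F="\<lambda>i j. complex_of_real c * A $$ (i, j)"])
    (auto simp: psd_iff_fn hermitian_fn_scale psd_fn_scale)

lemma psd_zero: "psd n (0\<^sub>m n n)"
  unfolding psd_iff_fn hermitian_fn_def psd_fn_def qform_def by simp

lemma psd_one: "psd 1 (1\<^sub>m 1)"
  unfolding psd_iff_fn hermitian_fn_def psd_fn_def qform_def by simp

lemma psd_rank_one:
  assumes "0 \<le> t"
  shows "psd n (mat n n (\<lambda>(a, b). complex_of_real t * (f a * cnj (f b))))"
proof (rule psd_of_fn[where F="\<lambda>a b. complex_of_real t * (f a * cnj (f b))"])
  have "complex_of_real (sqrt t) * complex_of_real (sqrt t) = complex_of_real t"
    using assms by (simp flip: of_real_mult)
  then show "psd_fn n (\<lambda>a b. complex_of_real t * (f a * cnj (f b)))"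
    by (intro psd_fn_gram[where K="{()}" and u="\<lambda>_ a. complex_of_real (sqrt t) * f a"])
      (simp add: algebra_simps)
qed (auto simp: hermitian_fn_def)

lemma cmod_inner_sum_square_le:
  "(cmod (\<Sum>i<n. cnj (g i) * f i))\<^sup>2 \<le> (\<Sum>i<n. (cmod (g i))\<^sup>2) * (\<Sum>i<n. (cmod (f i))\<^sup>2)"
proof -
  have "cmod (\<Sum>i<n. cnj (g i) * f i) \<le> (\<Sum>i<n. cmod (g i) * cmod (f i))"
    by (rule order_trans[OF norm_sum]) (simp add: norm_mult)
  then have "(cmod (\<Sum>i<n. cnj (g i) * f i))\<^sup>2 \<le> (\<Sum>i<n. cmod (g i) * cmod (f i))\<^sup>2"
    by (rule power_mono) simp
  also have "\<dots> \<le> (\<Sum>i<n. (cmod (g i))\<^sup>2) * (\<Sum>i<n. (cmod (f i))\<^sup>2)"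
    by (rule Cauchy_Schwarz_ineq_sum)
  finally show ?thesis .
qed

lemma psd_one_minus_rank_one:
  assumes f: "0 < (\<Sum>i<n. (cmod (f i))\<^sup>2)"
  defines "t \<equiv> 1 / (\<Sum>i<n. (cmod (f i))\<^sup>2)"
  shows "psd n (1\<^sub>m n - mat n n (\<lambda>(a, b). complex_of_real t * (f a * cnj (f b))))"
proof (rule psd_of_fn[where F="\<lambda>a b. (if a = b then 1 else 0) - complex_of_real t * (f a * cnj (f b))"])
  show "psd_fn n (\<lambda>a b. (if a = b then 1 else 0) - complex_of_real t * (f a * cnj (f b)))"
    unfolding psd_fn_def qform_diff qform_scale
  proof
    fix g :: "nat \<Rightarrow> complex"
    define \<sigma> where "\<sigma> = (\<Sum>a<n. cnj (g a) * f a)"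
    define S where "S = (\<Sum>a<n. (cmod (g a))\<^sup>2)"
    have "qform n (\<lambda>a b. if a = b then 1 else 0) g = (\<Sum>a<n. cnj (g a) * g a)"
      unfolding qform_def by (simp add: if_distrib[of "\<lambda>x. _ * x * _"] sum.delta cong: if_cong)
    also have "\<dots> = (\<Sum>a<n. complex_of_real ((cmod (g a))\<^sup>2))"
      by (intro sum.cong refl) (metis complex_norm_square mult.commute)
    also have "\<dots> = complex_of_real S"
      unfolding S_def by simp
    finally have id: "qform n (\<lambda>a b. if a = b then 1 else 0) g = complex_of_real S" .
    have "qform n (\<lambda>a b. f a * cnj (f b)) g = (\<Sum>a<n. cnj (g a) * f a) * (\<Sum>b<n. cnj (f b) * g b)"
      unfolding qform_def sum_product by (simp add: mult_ac)
    also have "\<dots> = \<sigma> * cnj \<sigma>"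
      unfolding \<sigma>_def by (simp add: mult.commute)
    also have "\<dots> = complex_of_real ((cmod \<sigma>)\<^sup>2)"
      by (rule complex_norm_square[symmetric])
    finally have rank_one: "qform n (\<lambda>a b. f a * cnj (f b)) g = complex_of_real ((cmod \<sigma>)\<^sup>2)" .
    have "(cmod \<sigma>)\<^sup>2 \<le> S * (\<Sum>i<n. (cmod (f i))\<^sup>2)"
      unfolding \<sigma>_def S_def by (rule cmod_inner_sum_square_le)
    then have "t * (cmod \<sigma>)\<^sup>2 \<le> S"
      using f unfolding t_def by (simp add: divide_le_eq mult.commute)
    then show "Im (qform n (\<lambda>a b. if a = b then 1 else 0) g - complex_of_real t * qform n (\<lambda>a b. f a * cnj (f b)) g) = 0 \<and>
        0 \<le> Re (qform n (\<lambda>a b. if a = b then 1 else 0) g - complex_of_real t * qform n (\<lambda>a b. f a * cnj (f b)) g)"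
      unfolding id rank_one by simp
  qed
qed (auto simp: hermitian_fn_def)

lemma mtrace_mult:
  assumes "A \<in> carrier_mat n n" "B \<in> carrier_mat n n"
  shows "mtrace (A * B) = (\<Sum>i<n. \<Sum>j<n. A $$ (i, j) * B $$ (j, i))"
  using assms unfolding mtrace_def by (simp add: scalar_prod_def atLeast0LessThan)

lemma mtrace_rank_one:
  assumes "A \<in> carrier_mat n n"
  shows "mtrace (A * mat n n (\<lambda>(a, b). complex_of_real t * (f a * cnj (f b))))
    = complex_of_real t * qform n (entries A) f"
  unfolding mtrace_mult[OF assms mat_carrier] qform_def
  by (simp add: sum_distrib_left algebra_simps)

lemma mtrace_diff_smult_mult:
  assumes "X \<in> carrier_mat n n" "Y \<in> carrier_mat n n" "M \<in> carrier_mat n n"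
  shows "mtrace ((\<alpha> \<cdot>\<^sub>m X - \<beta> \<cdot>\<^sub>m Y) * M) = \<alpha> * mtrace (X * M) - \<beta> * mtrace (Y * M)"
proof -
  have "mtrace ((\<alpha> \<cdot>\<^sub>m X - \<beta> \<cdot>\<^sub>m Y) * M)
      = (\<Sum>i<n. \<Sum>j<n. (\<alpha> * X $$ (i, j) - \<beta> * Y $$ (i, j)) * M $$ (j, i))"
  proof -
    have XY: "\<alpha> \<cdot>\<^sub>m X - \<beta> \<cdot>\<^sub>m Y \<in> carrier_mat n n"
      using assms(2) by (intro minus_carrier_mat) simp
    show ?thesis
      unfolding mtrace_mult[OF XY assms(3)] using assms(1,2) by (intro sum.cong refl) simp
  qed
  also have "\<dots> = \<alpha> * (\<Sum>i<n. \<Sum>j<n. X $$ (i, j) * M $$ (j, i)) - \<beta> * (\<Sum>i<n. \<Sum>j<n. Y $$ (i, j) * M $$ (j, i))"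
    by (simp add: algebra_simps sum_subtractf sum_distrib_left)
  finally show ?thesis
    using assms by (simp add: mtrace_mult)
qed

lemma mtrace_mult_psd:
  assumes "psd n A" "psd n B"
  shows "Im (mtrace (A * B)) = 0" "0 \<le> Re (mtrace (A * B))"
proof -
  have B: "hermitian_fn n (entries B)" "psd_fn n (entries B)"
    using assms(2) unfolding psd_iff_fn by auto
  obtain m :: nat and w where w: "\<forall>i<n. \<forall>j<n. B $$ (i, j) = (\<Sum>l<m. w l i * cnj (w l j))"
    using gram_factorization[OF B] by blast
  \<comment> \<open>with B = \<Sum>_l w_l w_l*, the trace tr(A B) is the sum of the values of the form of A at the w_l\<close>
  have "mtrace (A * B) = (\<Sum>l<m. qform n (entries A) (w l))"
    using w psd_carrier[OF assms(1)] psd_carrier[OF assms(2)]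
    by (simp add: mtrace_mult qform_def sum_distrib_left sum.swap[of _ "{..<m}"] mult_ac)
  then show "Im (mtrace (A * B)) = 0" "0 \<le> Re (mtrace (A * B))"
    using assms(1) unfolding psd_iff_fn psd_fn_def by (simp_all add: sum_nonneg)
qed

section \<open>Maximum confidence\<close>

lemma avg_state_carrier: "avg_state n I \<eta> \<rho> \<in> carrier_mat n n"
  unfolding avg_state_def by simp

lemma avg_state_index:
  "a < n \<Longrightarrow> b < n \<Longrightarrow> avg_state n I \<eta> \<rho> $$ (a, b) = (\<Sum>i\<in>I. complex_of_real (\<eta> i) * \<rho> i $$ (a, b))"
  unfolding avg_state_def by simp

lemma qform_avg_state:
  "qform n (entries (avg_state n I \<eta> \<rho>)) f = (\<Sum>i\<in>I. complex_of_real (\<eta> i) * qform n (entries (\<rho> i)) f)"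
  by (simp add: qform_cong_fn[OF avg_state_index] qform_sum qform_scale)

lemma mtrace_avg_state_mult:
  assumes M: "M \<in> carrier_mat n n" and \<rho>: "\<And>i. i \<in> I \<Longrightarrow> \<rho> i \<in> carrier_mat n n"
  shows "mtrace (avg_state n I \<eta> \<rho> * M) = (\<Sum>i\<in>I. complex_of_real (\<eta> i) * mtrace (\<rho> i * M))"
proof -
  have "mtrace (avg_state n I \<eta> \<rho> * M) =
      (\<Sum>a<n. \<Sum>b<n. \<Sum>i\<in>I. complex_of_real (\<eta> i) * (\<rho> i $$ (a, b) * M $$ (b, a)))"
    unfolding mtrace_mult[OF avg_state_carrier M] by (simp add: avg_state_index sum_distrib_right mult.assoc)
  also have "\<dots> = (\<Sum>i\<in>I. complex_of_real (\<eta> i) * (\<Sum>a<n. \<Sum>b<n. \<rho> i $$ (a, b) * M $$ (b, a)))"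
    by (simp add: sum.swap[of _ I] sum_distrib_left)
  also have "\<dots> = (\<Sum>i\<in>I. complex_of_real (\<eta> i) * mtrace (\<rho> i * M))"
    using \<rho> M by (intro sum.cong refl) (simp add: mtrace_mult[where n = n])
  finally show ?thesis .
qed

definition psd_family :: "nat \<Rightarrow> 'i set \<Rightarrow> ('i \<Rightarrow> real) \<Rightarrow> ('i \<Rightarrow> complex mat) \<Rightarrow> bool" where
  "psd_family n I \<eta> \<rho> \<longleftrightarrow> finite I \<and> (\<forall>i\<in>I. 0 \<le> \<eta> i \<and> psd n (\<rho> i))"

lemma ensemble_psd_family: "ensemble n I \<eta> \<rho> \<Longrightarrow> psd_family n I \<eta> \<rho>"
  unfolding ensemble_def density_op_def psd_family_def by (auto simp: less_imp_le)

lemma psd_family_qform: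
  assumes "psd_family n I \<eta> \<rho>" "x \<in> I"
  shows "Im (qform n (entries (\<rho> x)) f) = 0" "0 \<le> Re (qform n (entries (\<rho> x)) f)"
  using assms unfolding psd_family_def psd_iff_fn psd_fn_def by auto

lemma psd_avg_state:
  assumes "psd_family n I \<eta> \<rho>"
  shows "psd n (avg_state n I \<eta> \<rho>)"
proof (rule psd_of_fn[OF avg_state_carrier _ _ avg_state_index])
  have "\<forall>i\<in>I. 0 \<le> \<eta> i \<and> hermitian_fn n (entries (\<rho> i)) \<and> psd_fn n (entries (\<rho> i))"
    using assms unfolding psd_family_def psd_iff_fn by blast
  then show "hermitian_fn n (\<lambda>a b. \<Sum>i\<in>I. complex_of_real (\<eta> i) * \<rho> i $$ (a, b))"
    and "psd_fn n (\<lambda>a b. \<Sum>i\<in>I. complex_of_real (\<eta> i) * \<rho> i $$ (a, b))"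
    by (auto intro!: hermitian_fn_sum psd_fn_sum hermitian_fn_scale psd_fn_scale)
qed

lemma qform_avg_state_ge:
  assumes fam: "psd_family n I \<eta> \<rho>" and x: "x \<in> I"
  shows "Im (qform n (entries (avg_state n I \<eta> \<rho>)) f) = 0"
    and "\<eta> x * Re (qform n (entries (\<rho> x)) f) \<le> Re (qform n (entries (avg_state n I \<eta> \<rho>)) f)"
proof -
  have fin: "finite I" and \<eta>: "\<And>i. i \<in> I \<Longrightarrow> 0 \<le> \<eta> i"
    using fam unfolding psd_family_def by auto
  show "Im (qform n (entries (avg_state n I \<eta> \<rho>)) f) = 0"
    unfolding qform_avg_state Im_sum using psd_family_qform(1)[OF fam] by simp
  have "Re (qform n (entries (avg_state n I \<eta> \<rho>)) f) = (\<Sum>i\<in>I. \<eta> i * Re (qform n (entries (\<rho> i)) f))"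
    unfolding qform_avg_state Re_sum using psd_family_qform(1)[OF fam] by simp
  moreover have "\<eta> x * Re (qform n (entries (\<rho> x)) f) \<le> (\<Sum>i\<in>I. \<eta> i * Re (qform n (entries (\<rho> i)) f))"
    using \<eta> psd_family_qform(2)[OF fam] by (intro member_le_sum[OF x _ fin]) simp
  ultimately show "\<eta> x * Re (qform n (entries (\<rho> x)) f) \<le> Re (qform n (entries (avg_state n I \<eta> \<rho>)) f)"
    by simp
qed

lemma mtrace_avg_state_mult_ge:
  assumes fam: "psd_family n I \<eta> \<rho>" and x: "x \<in> I" and M: "psd n M"
  shows "\<eta> x * Re (mtrace (\<rho> x * M)) \<le> Re (mtrace (avg_state n I \<eta> \<rho> * M))"
proof -
  have fin: "finite I" and \<eta>: "\<And>i. i \<in> I \<Longrightarrow> 0 \<le> \<eta> i" and \<rho>: "\<And>i. i \<in> I \<Longrightarrow> psd n (\<rho> i)"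
    using fam unfolding psd_family_def by auto
  have tr: "mtrace (avg_state n I \<eta> \<rho> * M) = (\<Sum>i\<in>I. complex_of_real (\<eta> i) * mtrace (\<rho> i * M))"
    using psd_carrier[OF M] psd_carrier[OF \<rho>] by (rule mtrace_avg_state_mult)
  have "Re (mtrace (avg_state n I \<eta> \<rho> * M)) = (\<Sum>i\<in>I. \<eta> i * Re (mtrace (\<rho> i * M)))"
    unfolding tr Re_sum using mtrace_mult_psd(1)[OF \<rho> M] by simp
  moreover have "\<eta> x * Re (mtrace (\<rho> x * M)) \<le> (\<Sum>i\<in>I. \<eta> i * Re (mtrace (\<rho> i * M)))"
    using \<eta> mtrace_mult_psd(2)[OF \<rho> M] by (intro member_le_sum[OF x _ fin]) simp
  ultimately show "\<eta> x * Re (mtrace (\<rho> x * M)) \<le> Re (mtrace (avg_state n I \<eta> \<rho> * M))"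
    by simp
qed

lemma measurement_psd: "measurement n I Mq M \<Longrightarrow> x \<in> I \<Longrightarrow> psd n (M x)"
  unfolding measurement_def by blast

lemma measurement_rank_one:
  assumes fin: "finite I" and x: "x \<in> I" and f: "0 < (\<Sum>i<n. (cmod (f i))\<^sup>2)"
  defines "R \<equiv> mat n n (\<lambda>(a, b). complex_of_real (1 / (\<Sum>i<n. (cmod (f i))\<^sup>2)) * (f a * cnj (f b)))"
  shows "measurement n I (1\<^sub>m n - R) (\<lambda>i. if i = x then R else 0\<^sub>m n n)"
  unfolding measurement_def
proof (intro conjI ballI allI impI)
  show "psd n (1\<^sub>m n - R)"
    unfolding R_def by (rule psd_one_minus_rank_one[OF f])
  have "psd n R"
    unfolding R_def by (rule psd_rank_one) (use f in simp)
  then show "psd n (if i = x then R else 0\<^sub>m n n)" for i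
    using psd_zero by simp
  fix a b assume "a < n" "b < n"
  then show "(1\<^sub>m n - R) $$ (a, b) + (\<Sum>i\<in>I. (if i = x then R else 0\<^sub>m n n) $$ (a, b)) = 1\<^sub>m n $$ (a, b)"
    using fin x by (simp add: if_distrib[of "\<lambda>A. A $$ (a, b)"] sum.delta cong: if_cong) (simp add: R_def)
qed

definition confidence_ratios :: "nat \<Rightarrow> 'i set \<Rightarrow> ('i \<Rightarrow> real) \<Rightarrow> ('i \<Rightarrow> complex mat) \<Rightarrow> 'i \<Rightarrow> real set" where
  "confidence_ratios n I \<eta> \<rho> x =
     {\<eta> x * Re (mtrace (\<rho> x * M x)) / Re (mtrace (avg_state n I \<eta> \<rho> * M x)) | Mq M.
        measurement n I Mq M \<and> 0 < Re (mtrace (avg_state n I \<eta> \<rho> * M x))}"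

lemma max_conf_value_eq_Sup: "max_conf_value n I \<eta> \<rho> x = Sup (confidence_ratios n I \<eta> \<rho> x)"
  unfolding max_conf_value_def confidence_ratios_def ..

lemma confidence_ratio_le_1:
  assumes fam: "psd_family n I \<eta> \<rho>" and x: "x \<in> I" and y: "y \<in> confidence_ratios n I \<eta> \<rho> x"
  shows "y \<le> 1"
proof -
  obtain Mq M where y: "y = \<eta> x * Re (mtrace (\<rho> x * M x)) / Re (mtrace (avg_state n I \<eta> \<rho> * M x))"
    and m: "measurement n I Mq M" and pos: "0 < Re (mtrace (avg_state n I \<eta> \<rho> * M x))"
    using y unfolding confidence_ratios_def by blast
  show "y \<le> 1"
    unfolding y using pos mtrace_avg_state_mult_ge[OF fam x measurement_psd[OF m x]] by simp
qed

lemma max_conf_value_ge: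
  assumes fam: "psd_family n I \<eta> \<rho>" and x: "x \<in> I" and m: "measurement n I Mq M"
    and pos: "0 < Re (mtrace (avg_state n I \<eta> \<rho> * M x))"
  shows "\<eta> x * Re (mtrace (\<rho> x * M x)) / Re (mtrace (avg_state n I \<eta> \<rho> * M x)) \<le> max_conf_value n I \<eta> \<rho> x"
  unfolding max_conf_value_eq_Sup
proof (rule cSup_upper)
  show "bdd_above (confidence_ratios n I \<eta> \<rho> x)"
    using confidence_ratio_le_1[OF fam x] by (rule bdd_aboveI)
qed (use m pos in \<open>auto simp: confidence_ratios_def\<close>)

lemma qform_le_max_conf_value:
  assumes fam: "psd_family n I \<eta> \<rho>" and x: "x \<in> I"
  shows "\<eta> x * Re (qform n (entries (\<rho> x)) f)
    \<le> max_conf_value n I \<eta> \<rho> x * Re (qform n (entries (avg_state n I \<eta> \<rho>)) f)"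
proof (cases "Re (qform n (entries (avg_state n I \<eta> \<rho>)) f) = 0")
  case True
  then show ?thesis using qform_avg_state_ge(2)[OF fam x, of f] by simp
next
  case False
  define A where "A = avg_state n I \<eta> \<rho>"
  define N where "N = (\<Sum>i<n. (cmod (f i))\<^sup>2)"
  define R where "R = mat n n (\<lambda>(a, b). complex_of_real (1 / N) * (f a * cnj (f b)))"
  have fin: "finite I" and \<rho>: "\<rho> x \<in> carrier_mat n n"
    using fam x unfolding psd_family_def by (auto dest: psd_carrier)
  have "0 \<le> Re (qform n (entries A) f)"
    using psd_avg_state[OF fam] unfolding A_def psd_iff_fn psd_fn_def by blast
  with False have Q: "0 < Re (qform n (entries A) f)"
    unfolding A_def by simp
  have N: "0 < N"
    unfolding N_def by (rule sum_cmod_square_pos_of_qform[of n "entries A"]) (use Q in auto)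
  have m: "measurement n I (1\<^sub>m n - R) (\<lambda>i. if i = x then R else 0\<^sub>m n n)"
    unfolding R_def N_def by (rule measurement_rank_one[OF fin x N[unfolded N_def]])
  have tr: "mtrace (B * R) = complex_of_real (1 / N) * qform n (entries B) f" if "B \<in> carrier_mat n n" for B
    unfolding R_def by (rule mtrace_rank_one[OF that])
  have trA: "Re (mtrace (A * R)) = Re (qform n (entries A) f) / N"
    unfolding A_def tr[OF avg_state_carrier] by simp
  have tr\<rho>: "Re (mtrace (\<rho> x * R)) = Re (qform n (entries (\<rho> x)) f) / N"
    unfolding tr[OF \<rho>] by simp
  have "0 < Re (mtrace (A * R))"
    unfolding trA using Q N by simp
  then have "\<eta> x * Re (mtrace (\<rho> x * R)) / Re (mtrace (A * R)) \<le> max_conf_value n I \<eta> \<rho> x"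
    using max_conf_value_ge[OF fam x m] unfolding A_def by simp
  then have "\<eta> x * Re (qform n (entries (\<rho> x)) f) / Re (qform n (entries A) f) \<le> max_conf_value n I \<eta> \<rho> x"
    unfolding trA tr\<rho> using N by simp
  then show ?thesis
    using Q unfolding A_def by (simp add: pos_divide_le_eq)
qed

lemma psd_max_conf_gap:
  assumes fam: "psd_family n I \<eta> \<rho>" and x: "x \<in> I"
  shows "psd n (complex_of_real (max_conf_value n I \<eta> \<rho> x) \<cdot>\<^sub>m avg_state n I \<eta> \<rho> - complex_of_real (\<eta> x) \<cdot>\<^sub>m \<rho> x)"
proof -
  define C where "C = max_conf_value n I \<eta> \<rho> x"
  define A where "A = avg_state n I \<eta> \<rho>"
  have A: "A \<in> carrier_mat n n" "hermitian_fn n (entries A)"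
    using psd_avg_state[OF fam] unfolding A_def psd_iff_fn by auto
  have \<rho>: "\<rho> x \<in> carrier_mat n n" "hermitian_fn n (entries (\<rho> x))"
    using fam x unfolding psd_family_def psd_iff_fn by auto
  show ?thesis
    unfolding C_def[symmetric] A_def[symmetric]
  proof (rule psd_of_fn[where F="\<lambda>a b. complex_of_real C * A $$ (a, b) - complex_of_real (\<eta> x) * \<rho> x $$ (a, b)"])
    show "hermitian_fn n (\<lambda>a b. complex_of_real C * A $$ (a, b) - complex_of_real (\<eta> x) * \<rho> x $$ (a, b))"
      by (intro hermitian_fn_diff hermitian_fn_scale A(2) \<rho>(2))
    show "psd_fn n (\<lambda>a b. complex_of_real C * A $$ (a, b) - complex_of_real (\<eta> x) * \<rho> x $$ (a, b))"
      unfolding psd_fn_def qform_diff qform_scale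
      using qform_le_max_conf_value[OF fam x] qform_avg_state_ge(1)[OF fam x] psd_family_qform(1)[OF fam x]
      unfolding A_def C_def by (simp add: x)
  qed (use A \<rho> in auto)
qed

lemma max_conf_value_eqI:
  assumes gap: "psd n (complex_of_real K \<cdot>\<^sub>m avg_state n I \<eta> \<rho> - complex_of_real (\<eta> x) \<cdot>\<^sub>m \<rho> x)"
    and \<rho>: "\<rho> x \<in> carrier_mat n n" and x: "x \<in> I" and m: "measurement n I Mq M"
    and pos: "0 < Re (mtrace (avg_state n I \<eta> \<rho> * M x))"
    and attained: "\<eta> x * Re (mtrace (\<rho> x * M x)) = K * Re (mtrace (avg_state n I \<eta> \<rho> * M x))"
  shows "max_conf_value n I \<eta> \<rho> x = K"
  unfolding max_conf_value_eq_Sup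
proof (rule cSup_eq_maximum)
  show "K \<in> confidence_ratios n I \<eta> \<rho> x"
    unfolding confidence_ratios_def using m pos attained by force
  fix y assume "y \<in> confidence_ratios n I \<eta> \<rho> x"
  then obtain Nq N where y: "y = \<eta> x * Re (mtrace (\<rho> x * N x)) / Re (mtrace (avg_state n I \<eta> \<rho> * N x))"
    and meas: "measurement n I Nq N" and npos: "0 < Re (mtrace (avg_state n I \<eta> \<rho> * N x))"
    unfolding confidence_ratios_def by blast
  have "0 \<le> Re (mtrace ((complex_of_real K \<cdot>\<^sub>m avg_state n I \<eta> \<rho> - complex_of_real (\<eta> x) \<cdot>\<^sub>m \<rho> x) * N x))"
    by (rule mtrace_mult_psd(2)[OF gap measurement_psd[OF meas x]])
  then have "\<eta> x * Re (mtrace (\<rho> x * N x)) \<le> K * Re (mtrace (avg_state n I \<eta> \<rho> * N x))"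
    using psd_carrier[OF measurement_psd[OF meas x]]
    by (simp add: mtrace_diff_smult_mult[OF avg_state_carrier \<rho>])
  then show "y \<le> K"
    unfolding y using npos by (simp add: divide_le_eq)
qed

lemma max_conf_condition_of_certificate:
  assumes fam: "psd_family n I \<eta> \<rho>" and x: "x \<in> I" and m: "measurement n I Mq M"
    and gap: "psd n (complex_of_real K \<cdot>\<^sub>m avg_state n I \<eta> \<rho> - complex_of_real (\<eta> x) \<cdot>\<^sub>m \<rho> x)"
    and tight: "mtrace ((complex_of_real K \<cdot>\<^sub>m avg_state n I \<eta> \<rho> - complex_of_real (\<eta> x) \<cdot>\<^sub>m \<rho> x) * M x) = 0"
  shows "mtrace ((complex_of_real (max_conf_value n I \<eta> \<rho> x) \<cdot>\<^sub>m avg_state n I \<eta> \<rho>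
      - complex_of_real (\<eta> x) \<cdot>\<^sub>m \<rho> x) * M x) = 0"
proof -
  define a where "a = mtrace (avg_state n I \<eta> \<rho> * M x)"
  define r where "r = mtrace (\<rho> x * M x)"
  have \<rho>: "\<rho> x \<in> carrier_mat n n"
    using fam x unfolding psd_family_def by (auto dest: psd_carrier)
  have M: "M x \<in> carrier_mat n n"
    using psd_carrier[OF measurement_psd[OF m x]] .
  note lin = mtrace_diff_smult_mult[OF avg_state_carrier \<rho> M]
  have Kr: "complex_of_real K * a = complex_of_real (\<eta> x) * r"
    using tight unfolding lin a_def r_def by simp
  have a: "Im a = 0" "0 \<le> Re a"
    unfolding a_def by (rule mtrace_mult_psd[OF psd_avg_state[OF fam] measurement_psd[OF m x]])+
  show ?thesis
  proof (cases "Re a = 0")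
    case True
    then have "a = 0" using a by (simp add: complex_eq_iff)
    then show ?thesis using Kr unfolding lin a_def r_def by simp
  next
    case False
    have "\<eta> x * Re r = K * Re a"
      using arg_cong[OF Kr, of Re] by simp
    then have "max_conf_value n I \<eta> \<rho> x = K"
      using a False unfolding a_def r_def by (intro max_conf_value_eqI[OF gap \<rho> x m]) auto
    then show ?thesis using tight by simp
  qed
qed

section \<open>Kronecker products\<close>

lemma sum_lessThan_mult_div_mod:
  fixes h :: "nat \<Rightarrow> nat \<Rightarrow> 'a::comm_monoid_add"
  shows "(\<Sum>k<a * b. h (k div b) (k mod b)) = (\<Sum>i<a. \<Sum>j<b. h i j)"
proof -
  have "(\<Sum>k<a * b. h (k div b) (k mod b)) = (\<Sum>i<a. \<Sum>k\<in>{i * b..<i * b + b}. h (k div b) (k mod b))"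
    by (rule sum.nat_group[symmetric])
  also have "\<dots> = (\<Sum>i<a. \<Sum>j<b. h ((i * b + j) div b) ((i * b + j) mod b))"
  proof (rule sum.cong[OF refl])
    fix i
    have "(\<Sum>k\<in>{0 + i * b..<b + i * b}. h (k div b) (k mod b))
        = (\<Sum>j\<in>{0..<b}. h ((j + i * b) div b) ((j + i * b) mod b))"
      by (rule sum.shift_bounds_nat_ivl)
    then show "(\<Sum>k\<in>{i * b..<i * b + b}. h (k div b) (k mod b))
        = (\<Sum>j<b. h ((i * b + j) div b) ((i * b + j) mod b))"
      by (simp add: atLeast0LessThan add.commute)
  qed
  also have "\<dots> = (\<Sum>i<a. \<Sum>j<b. h i j)"
    by (intro sum.cong refl) auto
  finally show ?thesis .
qed

lemma div_mod_less_of_less_mult: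
  assumes "i < a * (b::nat)"
  shows "i div b < a" "i mod b < b"
proof -
  show "i div b < a" using assms by (intro less_mult_imp_div_less) simp
  have "0 < b" using assms by (cases b) auto
  then show "i mod b < b" by simp
qed

lemma kron_carrier:
  "A \<in> carrier_mat a a \<Longrightarrow> B \<in> carrier_mat b b \<Longrightarrow> kron_mat A B \<in> carrier_mat (a * b) (a * b)"
  unfolding kron_mat_def by simp

lemma kron_index:
  assumes "A \<in> carrier_mat a a" "B \<in> carrier_mat b b" "i < a * b" "j < a * b"
  shows "kron_mat A B $$ (i, j) = A $$ (i div b, j div b) * B $$ (i mod b, j mod b)"
  using assms unfolding kron_mat_def by simp

lemma kron_mult:
  assumes A: "A \<in> carrier_mat a a" and B: "B \<in> carrier_mat b b"
    and C: "C \<in> carrier_mat a a" and D: "D \<in> carrier_mat b b"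
  shows "kron_mat A B * kron_mat C D = kron_mat (A * C) (B * D)"
proof (rule eq_matI)
  have AC: "A * C \<in> carrier_mat a a" and BD: "B * D \<in> carrier_mat b b"
    using A B C D by auto
  show "dim_row (kron_mat A B * kron_mat C D) = dim_row (kron_mat (A * C) (B * D))"
    "dim_col (kron_mat A B * kron_mat C D) = dim_col (kron_mat (A * C) (B * D))"
    using kron_carrier[OF A B] kron_carrier[OF C D] kron_carrier[OF AC BD] by auto
  fix i j assume "i < dim_row (kron_mat (A * C) (B * D))" "j < dim_col (kron_mat (A * C) (B * D))"
  then have ij: "i < a * b" "j < a * b"
    using kron_carrier[OF AC BD] by auto
  have "(kron_mat A B * kron_mat C D) $$ (i, j) = (\<Sum>k<a * b. kron_mat A B $$ (i, k) * kron_mat C D $$ (k, j))"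
    using kron_carrier[OF A B] kron_carrier[OF C D] ij by (simp add: scalar_prod_def atLeast0LessThan)
  also have "\<dots> = (\<Sum>k<a * b. (A $$ (i div b, k div b) * C $$ (k div b, j div b)) *
      (B $$ (i mod b, k mod b) * D $$ (k mod b, j mod b)))"
    using kron_index[OF A B] kron_index[OF C D] ij by (intro sum.cong refl) (simp add: algebra_simps)
  also have "\<dots> = (\<Sum>k1<a. A $$ (i div b, k1) * C $$ (k1, j div b)) * (\<Sum>k2<b. B $$ (i mod b, k2) * D $$ (k2, j mod b))"
    unfolding sum_lessThan_mult_div_mod[where h = "\<lambda>k1 k2. (A $$ (i div b, k1) * C $$ (k1, j div b)) *
      (B $$ (i mod b, k2) * D $$ (k2, j mod b))"] by (simp only: sum_product)
  also have "\<dots> = kron_mat (A * C) (B * D) $$ (i, j)"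
    using A B C D div_mod_less_of_less_mult[OF ij(1)] div_mod_less_of_less_mult[OF ij(2)]
    by (simp add: kron_index[OF AC BD ij] scalar_prod_def atLeast0LessThan)
  finally show "(kron_mat A B * kron_mat C D) $$ (i, j) = kron_mat (A * C) (B * D) $$ (i, j)" .
qed

lemma mtrace_kron:
  assumes A: "A \<in> carrier_mat a a" and B: "B \<in> carrier_mat b b"
  shows "mtrace (kron_mat A B) = mtrace A * mtrace B"
proof -
  have "mtrace (kron_mat A B) = (\<Sum>k<a * b. A $$ (k div b, k div b) * B $$ (k mod b, k mod b))"
    unfolding mtrace_def using kron_carrier[OF A B] kron_index[OF A B] by simp
  also have "\<dots> = mtrace A * mtrace B"
    unfolding sum_lessThan_mult_div_mod[where h = "\<lambda>k1 k2. A $$ (k1, k1) * B $$ (k2, k2)"]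
    unfolding mtrace_def using A B by (simp add: sum_product)
  finally show ?thesis .
qed

lemma kron_smult:
  assumes A: "A \<in> carrier_mat a a" and B: "B \<in> carrier_mat b b"
  shows "kron_mat (c \<cdot>\<^sub>m A) (e \<cdot>\<^sub>m B) = (c * e) \<cdot>\<^sub>m kron_mat A B"
proof (rule eq_matI)
  have cA: "c \<cdot>\<^sub>m A \<in> carrier_mat a a" and eB: "e \<cdot>\<^sub>m B \<in> carrier_mat b b"
    using A B by auto
  show "dim_row (kron_mat (c \<cdot>\<^sub>m A) (e \<cdot>\<^sub>m B)) = dim_row ((c * e) \<cdot>\<^sub>m kron_mat A B)"
    "dim_col (kron_mat (c \<cdot>\<^sub>m A) (e \<cdot>\<^sub>m B)) = dim_col ((c * e) \<cdot>\<^sub>m kron_mat A B)"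
    using kron_carrier[OF A B] kron_carrier[OF cA eB] by auto
  fix i j assume "i < dim_row ((c * e) \<cdot>\<^sub>m kron_mat A B)" "j < dim_col ((c * e) \<cdot>\<^sub>m kron_mat A B)"
  then have ij: "i < a * b" "j < a * b"
    using kron_carrier[OF A B] by auto
  show "kron_mat (c \<cdot>\<^sub>m A) (e \<cdot>\<^sub>m B) $$ (i, j) = ((c * e) \<cdot>\<^sub>m kron_mat A B) $$ (i, j)"
    using kron_index[OF cA eB ij] kron_index[OF A B ij] kron_carrier[OF A B] ij A B
      div_mod_less_of_less_mult[OF ij(1)] div_mod_less_of_less_mult[OF ij(2)] by simp
qed

lemma kron_add_left_diff:
  assumes X: "X \<in> carrier_mat a a" and Y: "Y \<in> carrier_mat a a"
    and T: "T \<in> carrier_mat b b" and T': "T' \<in> carrier_mat b b"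
  shows "kron_mat (X + Y) T - kron_mat X T' = kron_mat Y T + kron_mat X (T - T')"
proof (rule eq_matI)
  have XY: "X + Y \<in> carrier_mat a a" and TT: "T - T' \<in> carrier_mat b b"
    using X Y T T' by auto
  note c = kron_carrier[OF XY T] kron_carrier[OF X T'] kron_carrier[OF Y T] kron_carrier[OF X TT]
  show "dim_row (kron_mat (X + Y) T - kron_mat X T') = dim_row (kron_mat Y T + kron_mat X (T - T'))"
    "dim_col (kron_mat (X + Y) T - kron_mat X T') = dim_col (kron_mat Y T + kron_mat X (T - T'))"
    using c by auto
  fix i j assume "i < dim_row (kron_mat Y T + kron_mat X (T - T'))" "j < dim_col (kron_mat Y T + kron_mat X (T - T'))"
  then have ij: "i < a * b" "j < a * b"
    using c by auto
  note dm = div_mod_less_of_less_mult[OF ij(1)] div_mod_less_of_less_mult[OF ij(2)]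
  show "(kron_mat (X + Y) T - kron_mat X T') $$ (i, j) = (kron_mat Y T + kron_mat X (T - T')) $$ (i, j)"
    using c ij X Y T T' dm
    by (simp add: kron_index[OF XY T ij] kron_index[OF X T' ij] kron_index[OF Y T ij] kron_index[OF X TT ij]
        algebra_simps)
qed

lemma psd_kron:
  assumes A: "psd a A" and B: "psd b B"
  shows "psd (a * b) (kron_mat A B)"
proof -
  obtain m1 :: nat and w1 where w1: "\<forall>i<a. \<forall>j<a. A $$ (i, j) = (\<Sum>l<m1. w1 l i * cnj (w1 l j))"
    using gram_factorization[of a "entries A"] A unfolding psd_iff_fn by blast
  obtain m2 :: nat and w2 where w2: "\<forall>i<b. \<forall>j<b. B $$ (i, j) = (\<Sum>l<m2. w2 l i * cnj (w2 l j))"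
    using gram_factorization[of b "entries B"] B unfolding psd_iff_fn by blast
  define u where "u = (\<lambda>(k1, k2) i. w1 k1 (i div b) * w2 k2 (i mod b))"
  note A' = psd_carrier[OF A] and B' = psd_carrier[OF B]
  \<comment> \<open>the Kronecker product of two Gram factorizations is a Gram factorization\<close>
  have gram: "kron_mat A B $$ (i, j) = (\<Sum>k\<in>{..<m1} \<times> {..<m2}. u k i * cnj (u k j))"
    if ij: "i < a * b" "j < a * b" for i j
  proof -
    note dm = div_mod_less_of_less_mult[OF ij(1)] div_mod_less_of_less_mult[OF ij(2)]
    have "kron_mat A B $$ (i, j) = (\<Sum>k1<m1. w1 k1 (i div b) * cnj (w1 k1 (j div b))) *
        (\<Sum>k2<m2. w2 k2 (i mod b) * cnj (w2 k2 (j mod b)))"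
      unfolding kron_index[OF A' B' ij] using w1 w2 dm by simp
    also have "\<dots> = (\<Sum>k\<in>{..<m1} \<times> {..<m2}. u k i * cnj (u k j))"
      unfolding sum_product sum.cartesian_product u_def by (intro sum.cong refl) (auto simp: algebra_simps)
    finally show ?thesis .
  qed
  show ?thesis
    by (rule psd_of_fn[OF kron_carrier[OF A' B'] hermitian_fn_gram psd_fn_gram gram]) simp_all
qed

lemma prod_list_map_upt: "prod_list (map (d :: nat \<Rightarrow> 'a::comm_monoid_mult) [0..<L]) = (\<Prod>l<L. d l)"
  by (induction L) (simp_all add: mult.commute)

lemma tensor_list_carrier:
  "(\<And>x. x \<in> set xs \<Longrightarrow> f x \<in> carrier_mat (d x) (d x)) \<Longrightarrow>
   tensor_list (map f xs) \<in> carrier_mat (prod_list (map d xs)) (prod_list (map d xs))"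
  by (induction xs) (auto intro: kron_carrier)

lemma tensor_list_mult:
  "(\<And>x. x \<in> set xs \<Longrightarrow> f x \<in> carrier_mat (d x) (d x) \<and> g x \<in> carrier_mat (d x) (d x)) \<Longrightarrow>
   tensor_list (map f xs) * tensor_list (map g xs) = tensor_list (map (\<lambda>x. f x * g x) xs)"
proof (induction xs)
  case (Cons y ys)
  have "tensor_list (map f ys) \<in> carrier_mat (prod_list (map d ys)) (prod_list (map d ys))"
    and "tensor_list (map g ys) \<in> carrier_mat (prod_list (map d ys)) (prod_list (map d ys))"
    using Cons.prems by (auto intro: tensor_list_carrier)
  moreover have "f y \<in> carrier_mat (d y) (d y)" "g y \<in> carrier_mat (d y) (d y)"
    using Cons.prems by auto
  ultimately show ?case
    using Cons kron_mult[of "f y" "d y" "tensor_list (map f ys)" _ "g y"] by simp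
qed simp

lemma mtrace_tensor_list:
  "(\<And>x. x \<in> set xs \<Longrightarrow> f x \<in> carrier_mat (d x) (d x)) \<Longrightarrow>
   mtrace (tensor_list (map f xs)) = (\<Prod>x\<leftarrow>xs. mtrace (f x))"
proof (induction xs)
  case (Cons y ys)
  have "tensor_list (map f ys) \<in> carrier_mat (prod_list (map d ys)) (prod_list (map d ys))"
    using Cons.prems by (auto intro: tensor_list_carrier)
  moreover have "f y \<in> carrier_mat (d y) (d y)"
    using Cons.prems by auto
  ultimately show ?case
    using Cons mtrace_kron[of "f y" "d y" "tensor_list (map f ys)"] by simp
qed (simp add: mtrace_def)

lemma mtrace_tensor_list_mult:
  assumes "\<And>x. x \<in> set xs \<Longrightarrow> f x \<in> carrier_mat (d x) (d x) \<and> g x \<in> carrier_mat (d x) (d x)"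
  shows "mtrace (tensor_list (map f xs) * tensor_list (map g xs)) = (\<Prod>x\<leftarrow>xs. mtrace (f x * g x))"
proof -
  have "tensor_list (map f xs) * tensor_list (map g xs) = tensor_list (map (\<lambda>x. f x * g x) xs)"
    using assms by (rule tensor_list_mult)
  moreover have "mtrace (tensor_list (map (\<lambda>x. f x * g x) xs)) = (\<Prod>x\<leftarrow>xs. mtrace (f x * g x))"
    by (rule mtrace_tensor_list[where d = d]) (use assms in \<open>auto intro: mult_carrier_mat\<close>)
  ultimately show ?thesis by simp
qed

lemma tensor_list_smult:
  "(\<And>x. x \<in> set xs \<Longrightarrow> f x \<in> carrier_mat (d x) (d x)) \<Longrightarrow>
   tensor_list (map (\<lambda>x. c x \<cdot>\<^sub>m f x) xs) = (\<Prod>x\<leftarrow>xs. c x) \<cdot>\<^sub>m tensor_list (map f xs)"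
proof (induction xs)
  case (Cons y ys)
  have "tensor_list (map f ys) \<in> carrier_mat (prod_list (map d ys)) (prod_list (map d ys))"
    using Cons.prems by (auto intro: tensor_list_carrier)
  moreover have "f y \<in> carrier_mat (d y) (d y)"
    using Cons.prems by auto
  ultimately show ?case
    using Cons kron_smult[of "f y" "d y" "tensor_list (map f ys)"] by simp
qed (auto intro!: eq_matI)

lemma psd_tensor_list:
  "(\<And>x. x \<in> set xs \<Longrightarrow> psd (d x) (f x)) \<Longrightarrow> psd (prod_list (map d xs)) (tensor_list (map f xs))"
  using psd_one by (induction xs) (simp_all add: psd_kron)

lemma psd_tensor_list_add_diff:
  "(\<And>x. x \<in> set xs \<Longrightarrow> psd (d x) (X x) \<and> psd (d x) (Y x)) \<Longrightarrow>
   psd (prod_list (map d xs)) (tensor_list (map (\<lambda>x. X x + Y x) xs) - tensor_list (map X xs))"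
proof (induction xs)
  case Nil
  have "tensor_list (map (\<lambda>x. X x + Y x) []) - tensor_list (map X []) = 0\<^sub>m 1 1"
    by (auto intro!: eq_matI)
  then show ?case using psd_zero[of 1] by (metis list.map(1) prod_list.Nil)
next
  case (Cons y ys)
  let ?T = "tensor_list (map (\<lambda>x. X x + Y x) ys)" and ?T' = "tensor_list (map X ys)"
  have X: "psd (d y) (X y)" and Y: "psd (d y) (Y y)"
    using Cons.prems by auto
  have T: "psd (prod_list (map d ys)) ?T"
    using Cons.prems by (intro psd_tensor_list) (simp add: psd_add)
  have T': "?T' \<in> carrier_mat (prod_list (map d ys)) (prod_list (map d ys))"
    using Cons.prems by (intro tensor_list_carrier) (auto dest: psd_carrier)
  have "tensor_list (map (\<lambda>x. X x + Y x) (y # ys)) - tensor_list (map X (y # ys))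
      = kron_mat (Y y) ?T + kron_mat (X y) (?T - ?T')"
    using kron_add_left_diff[OF psd_carrier[OF X] psd_carrier[OF Y] psd_carrier[OF T] T'] by simp
  moreover have "psd (prod_list (map d (y # ys))) (kron_mat (Y y) ?T + kron_mat (X y) (?T - ?T'))"
    using psd_add[OF psd_kron[OF Y T] psd_kron[OF X Cons.IH]] Cons.prems by simp
  ultimately show ?case by simp
qed

section \<open>Sequence ensembles\<close>

lemma Cons_in_seq_index_Suc:
  "x # c \<in> seq_index (Suc L) n \<longleftrightarrow> x \<in> {1..n 0} \<and> c \<in> seq_index L (\<lambda>l. n (Suc l))"
  unfolding seq_index_def by (auto simp: All_less_Suc2)

lemma seq_index_Suc:
  "seq_index (Suc L) n = (\<lambda>(x, c). x # c) ` ({1..n 0} \<times> seq_index L (\<lambda>l. n (Suc l)))"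
proof -
  have "c \<in> seq_index (Suc L) n \<Longrightarrow> \<exists>x c'. c = x # c'" for c
    unfolding seq_index_def by (auto simp: length_Suc_conv)
  then show ?thesis
    using Cons_in_seq_index_Suc by fastforce
qed

lemma finite_seq_index: "finite (seq_index L n)"
proof (induction L arbitrary: n)
  case 0
  have "seq_index 0 n = {[]}"
    unfolding seq_index_def by auto
  then show ?case by simp
qed (simp add: seq_index_Suc)

lemma sum_seq_index_Suc:
  "(\<Sum>c\<in>seq_index (Suc L) n. G c) = (\<Sum>x\<in>{1..n 0}. \<Sum>c\<in>seq_index L (\<lambda>l. n (Suc l)). G (x # c))"
proof -
  have "inj_on (\<lambda>(x, c). x # c) ({1..n 0} \<times> seq_index L (\<lambda>l. n (Suc l)))"
    by (auto simp: inj_on_def)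
  then show ?thesis
    unfolding seq_index_Suc by (simp add: sum.reindex sum.cartesian_product case_prod_unfold)
qed

lemma seq_eta_Cons: "seq_eta (Suc L) \<eta> (x # c) = \<eta> 0 x * seq_eta L (\<lambda>l. \<eta> (Suc l)) c"
  unfolding seq_eta_def prod.lessThan_Suc_shift by simp

lemma seq_rho_Cons: "seq_rho (Suc L) \<rho> (x # c) = kron_mat (\<rho> 0 x) (seq_rho L (\<lambda>l. \<rho> (Suc l)) c)"
  unfolding seq_rho_def by (simp add: upt_conv_Cons map_Suc_upt[symmetric] comp_def del: upt_Suc)

lemma seq_rho_carrier:
  assumes "\<forall>l<L. \<forall>i\<in>{1..n l}. \<rho> l i \<in> carrier_mat (d l) (d l)" and "c \<in> seq_index L n"
  shows "seq_rho L \<rho> c \<in> carrier_mat (\<Prod>l<L. d l) (\<Prod>l<L. d l)"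
  using tensor_list_carrier[of "[0..<L]" "\<lambda>l. \<rho> l (c ! l)" d] assms
  unfolding seq_rho_def seq_index_def prod_list_map_upt by simp

lemma psd_family_seq:
  assumes "\<forall>l<L. psd_family (d l) {1..n l} (\<eta> l) (\<rho> l)"
  shows "psd_family (\<Prod>l<L. d l) (seq_index L n) (seq_eta L \<eta>) (seq_rho L \<rho>)"
  unfolding psd_family_def
proof (intro conjI ballI finite_seq_index)
  fix c assume "c \<in> seq_index L n"
  then have c: "\<And>l. l < L \<Longrightarrow> 0 \<le> \<eta> l (c ! l) \<and> psd (d l) (\<rho> l (c ! l))"
    using assms unfolding seq_index_def psd_family_def by auto
  then show "0 \<le> seq_eta L \<eta> c"
    unfolding seq_eta_def by (intro prod_nonneg) (use c in blast)
  show "psd (\<Prod>l<L. d l) (seq_rho L \<rho> c)"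
    using psd_tensor_list[of "[0..<L]" d "\<lambda>l. \<rho> l (c ! l)"] c
    unfolding seq_rho_def prod_list_map_upt by simp
qed

lemma avg_state_seq_Suc:
  assumes carrier: "\<forall>l<Suc L. \<forall>i\<in>{1..n l}. \<rho> l i \<in> carrier_mat (d l) (d l)"
  shows "avg_state (d 0 * (\<Prod>l<L. d (Suc l))) (seq_index (Suc L) n) (seq_eta (Suc L) \<eta>) (seq_rho (Suc L) \<rho>)
    = kron_mat (avg_state (d 0) {1..n 0} (\<eta> 0) (\<rho> 0))
        (avg_state (\<Prod>l<L. d (Suc l)) (seq_index L (\<lambda>l. n (Suc l))) (seq_eta L (\<lambda>l. \<eta> (Suc l))) (seq_rho L (\<lambda>l. \<rho> (Suc l))))"
    (is "?S = kron_mat ?F ?R")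
proof (rule eq_matI)
  define D where "D = (\<Prod>l<L. d (Suc l))"
  have A0: "?F \<in> carrier_mat (d 0) (d 0)" and A1: "?R \<in> carrier_mat D D"
    unfolding D_def by (rule avg_state_carrier)+
  have \<rho>0: "\<rho> 0 x \<in> carrier_mat (d 0) (d 0)" if "x \<in> {1..n 0}" for x
    using carrier that by blast
  have \<rho>': "seq_rho L (\<lambda>l. \<rho> (Suc l)) c \<in> carrier_mat D D" if "c \<in> seq_index L (\<lambda>l. n (Suc l))" for c
    unfolding D_def using carrier that by (intro seq_rho_carrier) auto
  show "dim_row ?S = dim_row (kron_mat ?F ?R)" "dim_col ?S = dim_col (kron_mat ?F ?R)"
    using kron_carrier[OF A0 A1] by (simp_all add: avg_state_def D_def)
  fix a b assume "a < dim_row (kron_mat ?F ?R)" "b < dim_col (kron_mat ?F ?R)"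
  then have ab: "a < d 0 * D" "b < d 0 * D"
    using kron_carrier[OF A0 A1] by auto
  note dm = div_mod_less_of_less_mult[OF ab(1)] div_mod_less_of_less_mult[OF ab(2)]
  \<comment> \<open>both weights and states factor along the first tensor slot\<close>
  have "?S $$ (a, b) = (\<Sum>x\<in>{1..n 0}. \<Sum>c\<in>seq_index L (\<lambda>l. n (Suc l)).
      (complex_of_real (\<eta> 0 x) * \<rho> 0 x $$ (a div D, b div D)) *
      (complex_of_real (seq_eta L (\<lambda>l. \<eta> (Suc l)) c) * seq_rho L (\<lambda>l. \<rho> (Suc l)) c $$ (a mod D, b mod D)))"
    unfolding D_def[symmetric] avg_state_index[OF ab] sum_seq_index_Suc
    by (intro sum.cong refl) (simp add: seq_eta_Cons seq_rho_Cons kron_index[OF \<rho>0 \<rho>' ab] algebra_simps)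
  also have "\<dots> = ?F $$ (a div D, b div D) * ?R $$ (a mod D, b mod D)"
    using dm unfolding D_def by (simp add: avg_state_index sum_product)
  also have "\<dots> = kron_mat ?F ?R $$ (a, b)"
    using kron_index[OF A0 A1 ab] by simp
  finally show "?S $$ (a, b) = kron_mat ?F ?R $$ (a, b)" .
qed

lemma avg_state_seq:
  assumes "\<forall>l<L. \<forall>i\<in>{1..n l}. \<rho> l i \<in> carrier_mat (d l) (d l)"
  shows "avg_state (\<Prod>l<L. d l) (seq_index L n) (seq_eta L \<eta>) (seq_rho L \<rho>) =
    tensor_list (map (\<lambda>l. avg_state (d l) {1..n l} (\<eta> l) (\<rho> l)) [0..<L])"
  using assms
proof (induction L arbitrary: d n \<eta> \<rho>)
  case 0
  have "seq_index 0 n = {[]}"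
    unfolding seq_index_def by auto
  then show ?case
    by (intro eq_matI) (simp_all add: avg_state_def seq_eta_def seq_rho_def)
next
  case (Suc L)
  have "avg_state (\<Prod>l<Suc L. d l) (seq_index (Suc L) n) (seq_eta (Suc L) \<eta>) (seq_rho (Suc L) \<rho>)
      = kron_mat (avg_state (d 0) {1..n 0} (\<eta> 0) (\<rho> 0))
          (avg_state (\<Prod>l<L. d (Suc l)) (seq_index L (\<lambda>l. n (Suc l))) (seq_eta L (\<lambda>l. \<eta> (Suc l)))
            (seq_rho L (\<lambda>l. \<rho> (Suc l))))"
    unfolding prod.lessThan_Suc_shift by (rule avg_state_seq_Suc[OF Suc.prems])
  also have "\<dots> = tensor_list (map (\<lambda>l. avg_state (d l) {1..n l} (\<eta> l) (\<rho> l)) [0..<Suc L])"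
    using Suc.IH[of "\<lambda>l. n (Suc l)" "\<lambda>l. \<rho> (Suc l)" "\<lambda>l. d (Suc l)"] Suc.prems
    by (simp add: upt_conv_Cons map_Suc_upt[symmetric] comp_def del: upt_Suc)
  finally show ?case .
qed

lemma tensor_list_smult_avg_state:
  assumes "\<forall>l<L. \<forall>i\<in>{1..n l}. \<rho> l i \<in> carrier_mat (d l) (d l)"
  shows "tensor_list (map (\<lambda>l. complex_of_real (C l) \<cdot>\<^sub>m avg_state (d l) {1..n l} (\<eta> l) (\<rho> l)) [0..<L])
    = complex_of_real (\<Prod>l<L. C l) \<cdot>\<^sub>m avg_state (\<Prod>l<L. d l) (seq_index L n) (seq_eta L \<eta>) (seq_rho L \<rho>)"
  unfolding avg_state_seq[OF assms]
  by (subst tensor_list_smult[where d = d]) (simp_all add: avg_state_carrier prod_list_map_upt)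

lemma tensor_list_smult_seq_rho:
  assumes "\<forall>l<L. \<forall>i\<in>{1..n l}. \<rho> l i \<in> carrier_mat (d l) (d l)" and "c \<in> seq_index L n"
  shows "tensor_list (map (\<lambda>l. complex_of_real (\<eta> l (c ! l)) \<cdot>\<^sub>m \<rho> l (c ! l)) [0..<L])
    = complex_of_real (seq_eta L \<eta> c) \<cdot>\<^sub>m seq_rho L \<rho> c"
  unfolding seq_rho_def seq_eta_def using assms
  by (subst tensor_list_smult[where d = d]) (auto simp: prod_list_map_upt seq_index_def)

lemma psd_seq_max_conf_gap:
  assumes fam: "\<forall>l<L. psd_family (d l) {1..n l} (\<eta> l) (\<rho> l)" and c: "c \<in> seq_index L n"
  shows "psd (\<Prod>l<L. d l)
    (complex_of_real (\<Prod>l<L. max_conf_value (d l) {1..n l} (\<eta> l) (\<rho> l) (c ! l))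
        \<cdot>\<^sub>m avg_state (\<Prod>l<L. d l) (seq_index L n) (seq_eta L \<eta>) (seq_rho L \<rho>)
      - complex_of_real (seq_eta L \<eta> c) \<cdot>\<^sub>m seq_rho L \<rho> c)"
proof -
  define C where "C l = max_conf_value (d l) {1..n l} (\<eta> l) (\<rho> l) (c ! l)" for l
  define A where "A l = avg_state (d l) {1..n l} (\<eta> l) (\<rho> l)" for l
  define X where "X l = complex_of_real (\<eta> l (c ! l)) \<cdot>\<^sub>m \<rho> l (c ! l)" for l
  define Y where "Y l = complex_of_real (C l) \<cdot>\<^sub>m A l - X l" for l
  have cl: "l < L \<Longrightarrow> c ! l \<in> {1..n l}" for l
    using c unfolding seq_index_def by blast
  have carrier: "\<forall>l<L. \<forall>i\<in>{1..n l}. \<rho> l i \<in> carrier_mat (d l) (d l)"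
    using fam unfolding psd_family_def by (auto dest: psd_carrier)
  have XY: "psd (d l) (X l) \<and> psd (d l) (Y l)" and sum: "X l + Y l = complex_of_real (C l) \<cdot>\<^sub>m A l"
    if "l \<in> set [0..<L]" for l
  proof -
    have l: "l < L" using that by simp
    show "psd (d l) (X l) \<and> psd (d l) (Y l)"
    proof
      show "psd (d l) (X l)"
        unfolding X_def using fam l cl[OF l] unfolding psd_family_def by (auto intro: psd_smult)
      show "psd (d l) (Y l)"
        unfolding Y_def X_def C_def A_def using fam l cl[OF l] by (auto intro: psd_max_conf_gap)
    qed
    have "\<rho> l (c ! l) \<in> carrier_mat (d l) (d l)"
      using carrier cl[OF l] l by simp
    then show "X l + Y l = complex_of_real (C l) \<cdot>\<^sub>m A l"
      unfolding X_def Y_def A_def by (auto intro!: eq_matI simp: avg_state_def)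
  qed
  have "map (\<lambda>l. X l + Y l) [0..<L]
      = map (\<lambda>l. complex_of_real (C l) \<cdot>\<^sub>m avg_state (d l) {1..n l} (\<eta> l) (\<rho> l)) [0..<L]"
    using sum unfolding A_def by simp
  then have plus: "tensor_list (map (\<lambda>l. X l + Y l) [0..<L])
      = complex_of_real (\<Prod>l<L. C l) \<cdot>\<^sub>m avg_state (\<Prod>l<L. d l) (seq_index L n) (seq_eta L \<eta>) (seq_rho L \<rho>)"
    using tensor_list_smult_avg_state[OF carrier, of C \<eta>] by (simp only:)
  have minus: "tensor_list (map X [0..<L]) = complex_of_real (seq_eta L \<eta> c) \<cdot>\<^sub>m seq_rho L \<rho> c"
    unfolding X_def by (rule tensor_list_smult_seq_rho[OF carrier c])
  show ?thesis
    using psd_tensor_list_add_diff[of "[0..<L]" d X Y] XY unfolding plus minus prod_list_map_upt C_def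
    by simp
qed

lemma mtrace_seq_gap_tensor_list:
  assumes carrier: "\<forall>l<L. \<forall>i\<in>{1..n l}. \<rho> l i \<in> carrier_mat (d l) (d l)" and c: "c \<in> seq_index L n"
    and M: "\<forall>l<L. M l \<in> carrier_mat (d l) (d l)"
    and tight: "\<forall>l<L. mtrace ((complex_of_real (C l) \<cdot>\<^sub>m avg_state (d l) {1..n l} (\<eta> l) (\<rho> l)
        - complex_of_real (\<eta> l (c ! l)) \<cdot>\<^sub>m \<rho> l (c ! l)) * M l) = 0"
  shows "mtrace ((complex_of_real (\<Prod>l<L. C l) \<cdot>\<^sub>m avg_state (\<Prod>l<L. d l) (seq_index L n) (seq_eta L \<eta>) (seq_rho L \<rho>)
      - complex_of_real (seq_eta L \<eta> c) \<cdot>\<^sub>m seq_rho L \<rho> c) * tensor_list (map M [0..<L])) = 0"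
proof -
  define A where "A l = avg_state (d l) {1..n l} (\<eta> l) (\<rho> l)" for l
  have cl: "c ! l \<in> {1..n l}" if "l < L" for l
    using c that unfolding seq_index_def by blast
  have \<rho>: "\<rho> l (c ! l) \<in> carrier_mat (d l) (d l)" if "l < L" for l
    using carrier cl[OF that] that by blast
  have T: "tensor_list (map M [0..<L]) \<in> carrier_mat (\<Prod>l<L. d l) (\<Prod>l<L. d l)"
    using tensor_list_carrier[of "[0..<L]" M d] M unfolding prod_list_map_upt by simp
  have local: "complex_of_real (C l) * mtrace (A l * M l) = complex_of_real (\<eta> l (c ! l)) * mtrace (\<rho> l (c ! l) * M l)"
    if "l < L" for l
    using tight[rule_format, OF that] unfolding A_def mtrace_diff_smult_mult[OF avg_state_carrier \<rho>[OF that] M[rule_format, OF that]]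
    by simp
  have trA: "mtrace (avg_state (\<Prod>l<L. d l) (seq_index L n) (seq_eta L \<eta>) (seq_rho L \<rho>)
      * tensor_list (map M [0..<L])) = (\<Prod>l<L. mtrace (A l * M l))"
    unfolding avg_state_seq[OF carrier] A_def
    by (subst mtrace_tensor_list_mult[where d = d]) (use M in \<open>auto simp: avg_state_carrier prod_list_map_upt\<close>)
  have tr\<rho>: "mtrace (seq_rho L \<rho> c * tensor_list (map M [0..<L])) = (\<Prod>l<L. mtrace (\<rho> l (c ! l) * M l))"
    unfolding seq_rho_def
    by (subst mtrace_tensor_list_mult[where d = d]) (use M \<rho> in \<open>auto simp: prod_list_map_upt\<close>)
  have "complex_of_real (\<Prod>l<L. C l) * (\<Prod>l<L. mtrace (A l * M l))
      = complex_of_real (seq_eta L \<eta> c) * (\<Prod>l<L. mtrace (\<rho> l (c ! l) * M l))"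
    unfolding seq_eta_def of_real_prod prod.distrib[symmetric] using local by (intro prod.cong) auto
  then show ?thesis
    unfolding mtrace_diff_smult_mult[OF avg_state_carrier seq_rho_carrier[OF carrier c] T] trA tr\<rho> by simp
qed

theorem theorem5:
  fixes L :: nat and d n :: "nat \<Rightarrow> nat"
    and \<eta> :: "nat \<Rightarrow> nat \<Rightarrow> real" and \<rho> :: "nat \<Rightarrow> nat \<Rightarrow> complex mat"
    and Mlq :: "nat \<Rightarrow> complex mat" and Ml :: "nat \<Rightarrow> nat \<Rightarrow> complex mat"
    and Mq :: "complex mat" and M :: "nat list \<Rightarrow> complex mat"
  assumes "1 \<le> L"
    and "\<forall>l<L. ensemble (d l) {1..n l} (\<eta> l) (\<rho> l)"
    and "\<forall>l<L. max_conf_measurement (d l) {1..n l} (\<eta> l) (\<rho> l) (Mlq l) (Ml l)"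
    and "measurement (\<Prod>l<L. d l) (seq_index L n) Mq M"
    and "\<forall>c\<in>seq_index L n. M c = tensor_list (map (\<lambda>l. Ml l (c ! l)) [0..<L])"
  shows "max_conf_measurement (\<Prod>l<L. d l) (seq_index L n) (seq_eta L \<eta>) (seq_rho L \<rho>) Mq M"
  unfolding max_conf_measurement_def
proof (intro conjI ballI)
  have fam: "\<forall>l<L. psd_family (d l) {1..n l} (\<eta> l) (\<rho> l)"
    using assms(2) by (simp add: ensemble_psd_family)
  have carrier: "\<forall>l<L. \<forall>i\<in>{1..n l}. \<rho> l i \<in> carrier_mat (d l) (d l)"
    using fam unfolding psd_family_def by (auto dest: psd_carrier)
  show "measurement (\<Prod>l<L. d l) (seq_index L n) Mq M"
    by (fact assms(4))
  fix c assume c: "c \<in> seq_index L n"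
  then have cl: "\<forall>l<L. c ! l \<in> {1..n l}"
    unfolding seq_index_def by blast
  have "\<forall>l<L. Ml l (c ! l) \<in> carrier_mat (d l) (d l)"
    using assms(3) cl unfolding max_conf_measurement_def by (metis measurement_psd psd_carrier)
  moreover have "\<forall>l<L. mtrace ((complex_of_real (max_conf_value (d l) {1..n l} (\<eta> l) (\<rho> l) (c ! l))
      \<cdot>\<^sub>m avg_state (d l) {1..n l} (\<eta> l) (\<rho> l) - complex_of_real (\<eta> l (c ! l)) \<cdot>\<^sub>m \<rho> l (c ! l)) * Ml l (c ! l)) = 0"
    using assms(3) cl unfolding max_conf_measurement_def by blast
  ultimately show "mtrace ((complex_of_real (max_conf_value (\<Prod>l<L. d l) (seq_index L n) (seq_eta L \<eta>) (seq_rho L \<rho>) c)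
      \<cdot>\<^sub>m avg_state (\<Prod>l<L. d l) (seq_index L n) (seq_eta L \<eta>) (seq_rho L \<rho>)
      - complex_of_real (seq_eta L \<eta> c) \<cdot>\<^sub>m seq_rho L \<rho> c) * M c) = 0"
    using c assms(4,5) mtrace_seq_gap_tensor_list[OF carrier c]
    by (intro max_conf_condition_of_certificate[OF psd_family_seq[OF fam] c _ psd_seq_max_conf_gap[OF fam c]])
      auto
qed

end
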